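(* Let $\delta\geq 6$ be an integer of the form $\delta=4k+2$ with $k$ a positive integer. Then there does not exist a positive odd integer $n$ with the property that there exist positive integers $d_1, d_2$, each dividing $\frac{n^2+1}{2}$, such that $d_1+d_2=\delta n$. *)

theory Defs
  imports Main
begin

end

theory Submission
  imports Defs
begin

text \<open>
  Write \<open>N = (n\<^sup>2 + 1)/2\<close> and let \<open>g = gcd d\<^sub>1 d\<^sub>2\<close>, \<open>d\<^sub>1 = g a\<close>, \<open>d\<^sub>2 = g b\<close>.
  Then \<open>g a b\<close> divides \<open>N\<close>, and since \<open>g\<close> is coprime to \<open>n\<close> it divides \<open>\<delta>\<close>; with
  \<open>e = \<delta>/g\<close> and \<open>q = N/(a b)\<close> we get \<open>a + b = e n\<close> and \<open>2 q a b = n\<^sup>2 + 1\<close>, hence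
  \<open>a\<^sup>2 + b\<^sup>2 + e\<^sup>2 = (2 q e\<^sup>2 - 2) a b\<close>. Vieta jumping shows that such an equation
  \<open>x\<^sup>2 + y\<^sup>2 + e\<^sup>2 = c x y\<close> with \<open>c \<ge> 2 e\<^sup>2 - 2\<close> has positive solutions only for
  \<open>x = y = 1\<close>, so \<open>c = e\<^sup>2 + 2\<close>. This forces \<open>e = 2\<close> and \<open>q = 1\<close>, hence \<open>g = 1\<close> and
  \<open>\<delta> = 2\<close>. The hypothesis \<open>\<delta> \<equiv> 2 (mod 4)\<close> is what makes \<open>e\<close> even (as \<open>g\<close> is odd),
  hence \<open>e \<ge> 2\<close>.
\<close>

lemma vieta_jump_step:
  fixes x y e c :: int
  assumes "0 < x" "0 < y" and big: "y^2 + e^2 < x^2"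
    and eq: "x^2 + y^2 + e^2 = c * x * y"
  shows "0 < c * y - x" "c * y - x < x" "(c * y - x)^2 + y^2 + e^2 = c * (c * y - x) * y"
proof -
  have prod: "x * (c * y - x) = y^2 + e^2"
    using eq by (simp add: algebra_simps power2_eq_square)
  have "y^2 + e^2 > 0"
    using \<open>0 < y\<close> by (simp add: add_pos_nonneg)
  then show pos: "0 < c * y - x"
    using prod \<open>0 < x\<close> by (metis zero_less_mult_pos)
  have "x * (c * y - x) < x * x"
    using prod big by (simp add: power2_eq_square)
  then show "c * y - x < x"
    using \<open>0 < x\<close> by simp
  show "(c * y - x)^2 + y^2 + e^2 = c * (c * y - x) * y"
    using eq by (simp add: algebra_simps power2_eq_square)
qed

lemma vieta_base_case:
  fixes x y e c :: int
  assumes "e \<ge> 2" and c_ge: "2 * e^2 \<le> c + 2"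
    and "0 < y" "y \<le> x" and small: "x^2 \<le> y^2 + e^2"
    and eq: "x^2 + y^2 + e^2 = c * x * y"
  shows "c = e^2 + 2"
proof -
  have le: "c * x * y \<le> 2 * y^2 + 2 * e^2"
    using small eq by simp
  have e4: "e^2 \<ge> 4"
    using power_mono[of 2 e 2] \<open>e \<ge> 2\<close> by simp
  then have "c \<ge> 0"
    using c_ge by linarith
  consider "y \<ge> 2" | "y = 1" "x \<ge> 2" | "y = 1" "x = 1"
    using \<open>0 < y\<close> \<open>y \<le> x\<close> by linarith
  then show ?thesis
  proof cases
    case 1
    have "c * y * y \<le> c * x * y"
      using \<open>c \<ge> 0\<close> \<open>0 < y\<close> \<open>y \<le> x\<close> by (simp add: mult_right_mono mult_left_mono)
    moreover have "(2 * e^2 - 2) * y^2 \<le> c * y^2"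
      using c_ge by (intro mult_right_mono) auto
    ultimately have "(2 * e^2 - 4) * y^2 \<le> 2 * e^2"
      using le by (simp add: algebra_simps power2_eq_square)
    moreover have "(2 * e^2 - 4) * 4 \<le> (2 * e^2 - 4) * y^2"
      using power_mono[of 2 y 2] \<open>y \<ge> 2\<close> e4 by (intro mult_left_mono) auto
    ultimately show ?thesis
      using e4 by (simp add: algebra_simps)
  next
    case 2
    have "c * 2 \<le> c * x"
      using \<open>x \<ge> 2\<close> \<open>c \<ge> 0\<close> by (simp add: mult_left_mono)
    moreover have "c * x \<le> 2 + 2 * e^2"
      using le \<open>y = 1\<close> by simp
    ultimately show ?thesis
      using c_ge e4 by linarith
  next
    case 3
    then show ?thesis
      using eq by simp
  qed
qed

lemma vieta_jumping:
  fixes x y e c :: int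
  assumes "e \<ge> 2" and "2 * e^2 \<le> c + 2"
  shows "0 < x \<Longrightarrow> 0 < y \<Longrightarrow> x^2 + y^2 + e^2 = c * x * y \<Longrightarrow> c = e^2 + 2"
proof (induction "nat (x + y)" arbitrary: x y rule: less_induct)
  case (less x y)
  have sorted: "c = e^2 + 2"
    if "0 < v" "v \<le> u" "u^2 + v^2 + e^2 = c * u * v" "u + v = x + y" for u v
  proof (cases "v^2 + e^2 < u^2")
    case True
    with that vieta_jump_step[of u v e c] show ?thesis
      by (intro less.hyps[of "c * v - u" v]) auto
  next
    case False
    with that assms show ?thesis
      by (intro vieta_base_case[of e c v u]) auto
  qed
  show ?case
  proof (cases "y \<le> x")
    case True
    with less.prems show ?thesis
      by (intro sorted) auto
  next
    case False
    with less.prems show ?thesis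
      by (intro sorted[of x y]) (auto simp: algebra_simps)
  qed
qed

lemma sum_squares_eq_of_sum_eq_mult:
  fixes a b e n q :: "'a :: comm_ring_1"
  assumes "a + b = e * n" and "2 * q * a * b = n^2 + 1"
  shows "a^2 + b^2 + e^2 = (2 * q * e^2 - 2) * a * b"
proof -
  have "(a + b)^2 = e^2 * (2 * q * a * b - 1)"
    using assms by (simp add: power_mult_distrib)
  then show ?thesis
    by (simp add: algebra_simps power2_eq_square)
qed

lemma sum_and_double_product_solution_rigid:
  fixes a b e n q :: int
  assumes "0 < a" "0 < b" "e \<ge> 2" "q \<ge> 1"
    and "a + b = e * n" and "2 * q * a * b = n^2 + 1"
  shows "e = 2 \<and> q = 1"
proof -
  have "e^2 * 1 \<le> e^2 * q"
    using \<open>q \<ge> 1\<close> by (intro mult_left_mono) auto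
  then have "2 * e^2 \<le> (2 * q * e^2 - 2) + 2"
    by (simp add: algebra_simps)
  then have "2 * q * e^2 - 2 = e^2 + 2"
    using vieta_jumping \<open>e \<ge> 2\<close> \<open>0 < a\<close> \<open>0 < b\<close> sum_squares_eq_of_sum_eq_mult[OF assms(5,6)]
    by blast
  then have key: "e^2 * (2 * q - 1) = 4"
    by (simp add: algebra_simps)
  have e4: "e^2 \<ge> 4"
    using power_mono[of 2 e 2] \<open>e \<ge> 2\<close> by simp
  have "q = 1"
  proof (rule ccontr)
    assume "q \<noteq> 1"
    then have "e^2 * 3 \<le> e^2 * (2 * q - 1)"
      using \<open>q \<ge> 1\<close> by (intro mult_left_mono) auto
    then show False
      using key e4 by linarith
  qed
  with key have "e^2 = 2^2"
    by simp
  with \<open>e \<ge> 2\<close> have "e = 2"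
    using power2_eq_iff_nonneg[of e 2] by linarith
  with \<open>q = 1\<close> show ?thesis
    by simp
qed

lemma odd_half_square_plus_one:
  fixes n :: nat
  assumes "odd n"
  shows "2 * ((n^2 + 1) div 2) = n^2 + 1" "odd ((n^2 + 1) div 2)"
proof -
  obtain j where n: "n = 2 * j + 1"
    using assms oddE by blast
  have "(n^2 + 1) div 2 = 2 * (j * j + j) + 1"
    unfolding n by (simp add: power2_eq_square algebra_simps)
  then show "2 * ((n^2 + 1) div 2) = n^2 + 1" "odd ((n^2 + 1) div 2)"
    unfolding n by (simp_all add: power2_eq_square algebra_simps)
qed

lemma coprime_if_dvd_square_plus_one:
  fixes g n :: nat
  assumes "g dvd n^2 + 1"
  shows "coprime g n"
proof (rule coprimeI)
  fix c
  assume "c dvd g" "c dvd n"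
  then have "c dvd n^2 + 1" "c dvd n^2"
    using assms by (auto simp: power2_eq_square)
  then have "c dvd 1"
    by (metis dvd_add_right_iff)
  then show "is_unit c"
    by simp
qed

lemma divisor_pair_decomposition:
  fixes n d1 d2 \<delta> :: nat
  assumes "odd n" "0 < d1" "0 < d2"
    and "d1 dvd (n^2 + 1) div 2" "d2 dvd (n^2 + 1) div 2" and sum: "d1 + d2 = \<delta> * n"
  obtains g e a b m where "\<delta> = g * e" "odd g" "0 < a" "0 < b" "0 < g * m"
    "a + b = e * n" "2 * (g * m) * a * b = n^2 + 1"
proof -
  define N where "N = (n^2 + 1) div 2"
  have N: "2 * N = n^2 + 1" "odd N"
    unfolding N_def using odd_half_square_plus_one[OF \<open>odd n\<close>] by auto
  define g where "g = gcd d1 d2"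
  have "g > 0"
    unfolding g_def using \<open>0 < d1\<close> by simp
  then obtain a b where ab: "d1 = a * g" "d2 = b * g" "coprime a b"
    using gcd_coprime_exists[of d1 d2] unfolding g_def by auto
  have "lcm d1 d2 = g * (a * b)"
    unfolding ab using \<open>coprime a b\<close> by (simp add: lcm_mult_left lcm_coprime mult.commute[of _ g])
  moreover have "lcm d1 d2 dvd N"
    using assms(4,5) unfolding N_def by (simp add: lcm_least)
  ultimately obtain m where m: "N = g * (a * b) * m"
    by (auto elim: dvdE)
  have "n^2 + 1 = g * (2 * a * b * m)"
    using m N(1) by (simp add: algebra_simps)
  then have "g dvd n^2 + 1"
    by simp
  then have "coprime g n"
    by (rule coprime_if_dvd_square_plus_one)
  moreover have "g dvd \<delta> * n"
    using sum unfolding ab by (metis dvd_add dvd_triv_right)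
  ultimately obtain e where e: "\<delta> = g * e"
    by (auto simp: coprime_dvd_mult_left_iff elim: dvdE)
  have "g * (a + b) = g * (e * n)"
    using sum unfolding ab e by (simp add: algebra_simps)
  then have "a + b = e * n"
    using \<open>g > 0\<close> by simp
  moreover have "odd g" "m \<noteq> 0"
    using m N(2) by (auto simp: odd_pos)
  moreover have "2 * (g * m) * a * b = n^2 + 1"
    using m N(1) by (simp add: algebra_simps)
  ultimately show ?thesis
    using \<open>0 < d1\<close> \<open>0 < d2\<close> \<open>g > 0\<close> unfolding ab by (intro that[OF e]) auto
qed

theorem theorem3:
  fixes \<delta> k :: nat
  assumes "k > 0" and "\<delta> = 4 * k + 2"
  shows "\<not> (\<exists>n::nat. n > 0 \<and> odd n \<and>
            (\<exists>d1 d2 :: nat. d1 > 0 \<and> d2 > 0 \<and>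
               d1 dvd ((n^2 + 1) div 2) \<and> d2 dvd ((n^2 + 1) div 2) \<and>
               d1 + d2 = \<delta> * n))"
proof
  assume "\<exists>n::nat. n > 0 \<and> odd n \<and>
            (\<exists>d1 d2 :: nat. d1 > 0 \<and> d2 > 0 \<and>
               d1 dvd ((n^2 + 1) div 2) \<and> d2 dvd ((n^2 + 1) div 2) \<and>
               d1 + d2 = \<delta> * n)"
  then obtain n d1 d2 where "odd n" "0 < d1" "0 < d2"
    "d1 dvd (n^2 + 1) div 2" "d2 dvd (n^2 + 1) div 2" "d1 + d2 = \<delta> * n"
    by blast
  then obtain g e a b m where ge: "\<delta> = g * e" "odd g" and ab: "0 < a" "0 < b" "0 < g * m"
    "a + b = e * n" "2 * (g * m) * a * b = n^2 + 1"
    by (rule divisor_pair_decomposition)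
  have "even \<delta>" "\<delta> \<noteq> 0"
    using assms(2) by presburger+
  then have "even e" "0 < e"
    using ge by auto
  then have "int e \<ge> 2"
    by presburger
  moreover have "int a + int b = int e * int n" "2 * int (g * m) * int a * int b = int n ^ 2 + 1"
    using arg_cong[OF ab(4), of int] arg_cong[OF ab(5), of int] by simp_all
  moreover have "1 \<le> int (g * m)"
    using ab(3) by linarith
  ultimately have "int e = 2 \<and> int (g * m) = 1"
    using ab(1,2) by (intro sum_and_double_product_solution_rigid) simp_all
  then have "e = 2" "g * m = 1"
    by linarith+
  then have "\<delta> = 2"
    using ge(1) by simp
  with assms show False
    by simp
qed

end
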